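(* Let $(V,\Omega)$ be a finite-dimensional real symplectic vector space and let $A:V\to V$ be a linear map with $\Omega(Ax,y)+\Omega(x,Ay)=0$ for all $x,y\in V$ and $A^2=-I$. Let $\theta^A$ be the one-form on $V$ given by $\theta^A_z(v_z)=\frac{1}{2}\Omega(z-Az,v)$. Then ${\rm Aut}(V,\theta^A)=\{g\in{\rm Sp}(V,\Omega): gA=Ag\}$, where ${\rm Aut}(V,\theta^A)$ is the group of all diffeomorphisms $g:V\to V$ satisfying $g^*\theta^A=\theta^A$.
   Context: $V$ is a finite-dimensional real vector space and $\Omega$ a nonsingular alternating bilinear form on $V$. For $z,v\in V$, $v_z\in T_zV$ denotes the tangent vector at $z$ corresponding to $v$ under the canonical identification $T_zV\cong V$. Equivalently, $\theta^A=\theta^0+d\psi^A$ where $\theta^0_z(v_z)=\frac12\Omega(z,v)$ and $\psi^A(z)=\frac14\Omega(z,Az)$. For a smooth map $g:V\to V$, $(g^*\theta^A)_z(v_z)=\frac12\Omega(g(z)-Ag(z),g'_z v)$, where $g'_z$ is the derivative of $g$ at $z$. ${\rm Sp}(V,\Omega)$ is the group of linear automorphisms of $V$ preserving $\Omega$. *)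

theory Defs
  imports "HOL-Analysis.Analysis"
begin

coinductive smooth :: "('a::euclidean_space \<Rightarrow> 'b::euclidean_space) \<Rightarrow> bool" where
  "(\<forall>x. f differentiable (at x)) \<Longrightarrow>
   (\<forall>v. smooth (\<lambda>x. frechet_derivative f (at x) v)) \<Longrightarrow> smooth f"

definition diffeomorphism :: "('a::euclidean_space \<Rightarrow> 'a) \<Rightarrow> bool" where
  "diffeomorphism g \<longleftrightarrow> bij g \<and> smooth g \<and> smooth (inv g)"

text \<open>One-forms on V are represented as maps z \<mapsto> (v \<mapsto> \<theta>_z(v_z)).\<close>
type_synonym 'a one_form = "'a \<Rightarrow> 'a \<Rightarrow> real"

definition pullback :: "('a::euclidean_space \<Rightarrow> 'a) \<Rightarrow> 'a one_form \<Rightarrow> 'a one_form" where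
  "pullback g \<theta> = (\<lambda>z v. \<theta> (g z) (frechet_derivative g (at z) v))"

definition theta_A :: "('a::euclidean_space \<Rightarrow> 'a \<Rightarrow> real) \<Rightarrow> ('a \<Rightarrow> 'a) \<Rightarrow> 'a one_form" where
  "theta_A \<Omega> A = (\<lambda>z v. 1/2 * \<Omega> (z - A z) v)"

definition symplectic_form :: "('a::euclidean_space \<Rightarrow> 'a \<Rightarrow> real) \<Rightarrow> bool" where
  "symplectic_form \<Omega> \<longleftrightarrow> bilinear \<Omega> \<and> (\<forall>x. \<Omega> x x = 0) \<and>
     (\<forall>x. (\<forall>y. \<Omega> x y = 0) \<longrightarrow> x = 0)"

definition Sp :: "('a::euclidean_space \<Rightarrow> 'a \<Rightarrow> real) \<Rightarrow> ('a \<Rightarrow> 'a) set" where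
  "Sp \<Omega> = {g. linear g \<and> bij g \<and> (\<forall>x y. \<Omega> (g x) (g y) = \<Omega> x y)}"

definition Aut :: "'a::euclidean_space one_form \<Rightarrow> ('a \<Rightarrow> 'a) set" where
  "Aut \<theta> = {g. diffeomorphism g \<and> pullback g \<theta> = \<theta>}"

end

theory Submission
  imports Defs
begin

text \<open>A diffeomorphism g preserving \<theta>A also preserves d\<theta>A = \<Omega>, so each derivative Dg(z) is
  symplectic. Since the vector field X(z) = z - A z is \<Omega>-dual to 2\<theta>A, g then maps X to itself
  and commutes with its flow z \<mapsto> exp t (cos t z - sin t A z). At t = -2\<pi>n this flow is the
  homothety of ratio exp (-2\<pi>n), so g commutes with homotheties of arbitrarily small ratio and,
  being differentiable at 0, equals its linearisation there. Conversely every linear symplectic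
  map commuting with A visibly preserves \<theta>A.\<close>

section \<open>Derivatives\<close>

lemma second_difference_mean_value:
  fixes f :: "'a::real_normed_vector \<Rightarrow> real"
  assumes f': "\<And>x. (f has_derivative f' x) (at x)"
    and f'': "\<And>x w. ((\<lambda>x. f' x w) has_derivative f'' x w) (at x)"
    and "h > 0"
  obtains s t where "0 < s" "s < h" "0 < t" "t < h"
    "f (z + h *\<^sub>R u + h *\<^sub>R v) - f (z + h *\<^sub>R u) - f (z + h *\<^sub>R v) + f z
      = h * h * f'' (z + s *\<^sub>R u + t *\<^sub>R v) u v"
proof -
  have lin1: "linear (f' x)" for x using f'[of x] has_derivative_linear by blast
  have lin2: "linear (f'' x w)" for x w using f''[of w x] has_derivative_linear by blast
  define p where "p s = f (z + s *\<^sub>R u + h *\<^sub>R v) - f (z + s *\<^sub>R u)" for s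
  have "(p has_derivative (\<lambda>d. f' (z + s *\<^sub>R u + h *\<^sub>R v) (d *\<^sub>R u) - f' (z + s *\<^sub>R u) (d *\<^sub>R u)))
      (at s within {0..h})" for s
  proof -
    have a: "((\<lambda>s. z + s *\<^sub>R u + h *\<^sub>R v) has_derivative (\<lambda>d. d *\<^sub>R u)) (at s)"
      and b: "((\<lambda>s. z + s *\<^sub>R u) has_derivative (\<lambda>d. d *\<^sub>R u)) (at s)"
      by (auto intro!: derivative_eq_intros)
    show ?thesis
      unfolding p_def
      by (rule has_derivative_at_withinI,
          rule has_derivative_diff[OF has_derivative_compose[OF a f'] has_derivative_compose[OF b f']])
  qed
  from mvt_simple[OF \<open>h > 0\<close> this] obtain s where s: "s \<in> {0<..<h}"
    and ps: "p h - p 0 = f' (z + s *\<^sub>R u + h *\<^sub>R v) ((h - 0) *\<^sub>R u) - f' (z + s *\<^sub>R u) ((h - 0) *\<^sub>R u)"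
    by blast
  define q where "q t = f' (z + s *\<^sub>R u + t *\<^sub>R v) u" for t
  have "(q has_derivative (\<lambda>d. f'' (z + s *\<^sub>R u + t *\<^sub>R v) u (d *\<^sub>R v))) (at t within {0..h})" for t
  proof -
    have "((\<lambda>t. z + s *\<^sub>R u + t *\<^sub>R v) has_derivative (\<lambda>d. d *\<^sub>R v)) (at t)"
      by (auto intro!: derivative_eq_intros)
    from has_derivative_compose[OF this f''] show ?thesis
      unfolding q_def by (rule has_derivative_at_withinI)
  qed
  from mvt_simple[OF \<open>h > 0\<close> this] obtain t where t: "t \<in> {0<..<h}"
    and qt: "q h - q 0 = f'' (z + s *\<^sub>R u + t *\<^sub>R v) u ((h - 0) *\<^sub>R v)"
    by blast
  have "f (z + h *\<^sub>R u + h *\<^sub>R v) - f (z + h *\<^sub>R u) - f (z + h *\<^sub>R v) + f z = p h - p 0"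
    unfolding p_def by (simp add: algebra_simps)
  also have "\<dots> = h * (q h - q 0)"
    using ps unfolding q_def by (simp add: linear_cmul[OF lin1] algebra_simps)
  also have "\<dots> = h * h * f'' (z + s *\<^sub>R u + t *\<^sub>R v) u v"
    using qt by (simp add: linear_cmul[OF lin2])
  finally show ?thesis using s t that by auto
qed

lemma second_derivative_symmetric_real:
  fixes f :: "'a::real_normed_vector \<Rightarrow> real"
  assumes f': "\<And>x. (f has_derivative f' x) (at x)"
    and f'': "\<And>x w. ((\<lambda>x. f' x w) has_derivative f'' x w) (at x)"
    and cont: "\<And>w u. continuous_on UNIV (\<lambda>x. f'' x w u)"
  shows "f'' z u v = f'' z v u"
proof (rule ccontr)
  assume ne: "f'' z u v \<noteq> f'' z v u"
  define e where "e = \<bar>f'' z u v - f'' z v u\<bar> / 2"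
  have "e > 0" using ne by (simp add: e_def)
  obtain da where da: "da > 0" "\<And>x. dist x z < da \<Longrightarrow> dist (f'' x u v) (f'' z u v) < e"
    using cont[of u v] \<open>e > 0\<close> unfolding continuous_on_iff by (metis UNIV_I)
  obtain db where db: "db > 0" "\<And>x. dist x z < db \<Longrightarrow> dist (f'' x v u) (f'' z v u) < e"
    using cont[of v u] \<open>e > 0\<close> unfolding continuous_on_iff by (metis UNIV_I)
  define h where "h = min da db / (norm u + norm v + 1)"
  have den: "0 < norm u + norm v + 1" by (smt (verit) norm_ge_zero)
  have "h > 0" using da db den unfolding h_def by (intro divide_pos_pos) auto
  have close: "dist (z + s *\<^sub>R a + t *\<^sub>R b) z < min da db"
    if "0 < s" "s < h" "0 < t" "t < h" "norm a + norm b = norm u + norm v" for s t a b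
  proof -
    have "dist (z + s *\<^sub>R a + t *\<^sub>R b) z = norm (s *\<^sub>R a + t *\<^sub>R b)" by (simp add: dist_norm)
    also have "\<dots> \<le> s * norm a + t * norm b"
      using that by (metis abs_of_pos norm_scaleR norm_triangle_ineq)
    also have "\<dots> \<le> h * norm a + h * norm b"
      using that by (intro add_mono mult_right_mono) auto
    also have "\<dots> = h * (norm u + norm v)"
      using that(5) by (simp add: distrib_left[symmetric])
    also have "\<dots> < h * (norm u + norm v + 1)" using \<open>h > 0\<close> by simp
    also have "\<dots> = min da db" using den by (simp add: h_def)
    finally show ?thesis .
  qed
  obtain s t where st: "0 < s" "s < h" "0 < t" "t < h" and eq1:
    "f (z + h *\<^sub>R u + h *\<^sub>R v) - f (z + h *\<^sub>R u) - f (z + h *\<^sub>R v) + f z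
      = h * h * f'' (z + s *\<^sub>R u + t *\<^sub>R v) u v"
    using second_difference_mean_value[OF f' f'' \<open>h > 0\<close>] by blast
  obtain s' t' where st': "0 < s'" "s' < h" "0 < t'" "t' < h" and eq2:
    "f (z + h *\<^sub>R v + h *\<^sub>R u) - f (z + h *\<^sub>R v) - f (z + h *\<^sub>R u) + f z
      = h * h * f'' (z + s' *\<^sub>R v + t' *\<^sub>R u) v u"
    using second_difference_mean_value[OF f' f'' \<open>h > 0\<close>] by blast
  have "h * h * f'' (z + s *\<^sub>R u + t *\<^sub>R v) u v = h * h * f'' (z + s' *\<^sub>R v + t' *\<^sub>R u) v u"
    using eq1 eq2 by (simp add: algebra_simps)
  then have eq: "f'' (z + s *\<^sub>R u + t *\<^sub>R v) u v = f'' (z + s' *\<^sub>R v + t' *\<^sub>R u) v u"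
    using \<open>h > 0\<close> by simp
  have "dist (f'' (z + s *\<^sub>R u + t *\<^sub>R v) u v) (f'' z u v) < e"
    using da(2) close[OF st] by simp
  moreover have "dist (f'' (z + s' *\<^sub>R v + t' *\<^sub>R u) v u) (f'' z v u) < e"
    using db(2) close[OF st'] by (simp add: add.commute)
  ultimately show False
    using eq unfolding e_def dist_real_def by (auto simp: abs_if split: if_splits)
qed

lemma second_derivative_symmetric:
  fixes f :: "'a::real_normed_vector \<Rightarrow> 'b::euclidean_space"
  assumes f': "\<And>x. (f has_derivative f' x) (at x)"
    and f'': "\<And>x w. ((\<lambda>x. f' x w) has_derivative f'' x w) (at x)"
    and cont: "\<And>w u. continuous_on UNIV (\<lambda>x. f'' x w u)"
  shows "f'' z u v = f'' z v u"
proof (rule euclidean_eqI)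
  fix e :: 'b
  have "((\<lambda>x. e \<bullet> f x) has_derivative (\<lambda>w. e \<bullet> f' x w)) (at x)" for x
    by (rule bounded_linear.has_derivative[OF bounded_linear_inner_right f'])
  moreover have "((\<lambda>x. e \<bullet> f' x w) has_derivative (\<lambda>u. e \<bullet> f'' x w u)) (at x)" for x w
    by (rule bounded_linear.has_derivative[OF bounded_linear_inner_right f''])
  moreover have "continuous_on UNIV (\<lambda>x. e \<bullet> f'' x w u)" for w u
    by (intro continuous_intros cont)
  ultimately have "e \<bullet> f'' z u v = e \<bullet> f'' z v u"
    by (rule second_derivative_symmetric_real)
  then show "f'' z u v \<bullet> e = f'' z v u \<bullet> e"
    by (simp add: inner_commute)
qed

lemma frechet_derivative_linear:
  fixes l :: "'a::euclidean_space \<Rightarrow> 'b::euclidean_space"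
  assumes "linear l"
  shows "frechet_derivative l (at x) = l"
  using frechet_derivative_at[OF linear_imp_has_derivative[OF assms]] by simp

lemma homogeneous_has_derivative_at_0_eq:
  fixes g :: "'a::real_normed_vector \<Rightarrow> 'b::real_normed_vector"
  assumes g': "(g has_derivative L) (at 0)"
    and homogeneous: "\<And>n z. g (s n *\<^sub>R z) = s n *\<^sub>R g z"
    and "\<And>n. s n \<noteq> 0" and "s \<longlonglongrightarrow> 0"
  shows "g z = L z"
proof -
  have lin: "bounded_linear L" using g' by (rule has_derivative_bounded_linear)
  have "(\<lambda>n. s n *\<^sub>R g 0) \<longlonglongrightarrow> 0"
    using tendsto_scaleR[OF \<open>s \<longlonglongrightarrow> 0\<close> tendsto_const[of "g 0"]] by simp
  moreover have "(\<lambda>n. s n *\<^sub>R g 0) = (\<lambda>n. g 0)"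
    using homogeneous[of _ 0] by simp
  ultimately have g0: "g 0 = 0" by (simp add: LIMSEQ_const_iff)
  show ?thesis
  proof (cases "z = 0")
    case True
    then show ?thesis using g0 lin by (simp add: linear_simps)
  next
    case False
    have z_to_0: "filterlim (\<lambda>n. s n *\<^sub>R z) (at 0) sequentially"
      unfolding filterlim_at
      using \<open>z \<noteq> 0\<close> \<open>\<And>n. s n \<noteq> 0\<close> tendsto_scaleR[OF \<open>s \<longlonglongrightarrow> 0\<close> tendsto_const[of z]] by simp
    have "((\<lambda>y. norm (g y - g 0 - L (y - 0)) / norm (y - 0)) \<longlongrightarrow> 0) (at 0)"
      using g' unfolding has_derivative_iff_norm by blast
    then have "(\<lambda>n. norm (g (s n *\<^sub>R z) - g 0 - L (s n *\<^sub>R z - 0)) / norm (s n *\<^sub>R z - 0)) \<longlonglongrightarrow> 0"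
      by (rule filterlim_compose[OF _ z_to_0])
    moreover have "norm (g (s n *\<^sub>R z) - g 0 - L (s n *\<^sub>R z - 0)) / norm (s n *\<^sub>R z - 0)
        = norm (g z - L z) / norm z" for n
      using \<open>s n \<noteq> 0\<close> g0
      by (simp add: homogeneous linear_simps[OF lin] scaleR_diff_right[symmetric])
    ultimately have "norm (g z - L z) / norm z = 0"
      by (simp add: LIMSEQ_const_iff)
    then show ?thesis using \<open>z \<noteq> 0\<close> by simp
  qed
qed

section \<open>Smooth maps\<close>

lemma smoothD:
  assumes "smooth f"
  shows "(f has_derivative frechet_derivative f (at x)) (at x)"
    and "smooth (\<lambda>x. frechet_derivative f (at x) v)"
  using assms by (auto elim: smooth.cases simp: frechet_derivative_works)

lemma smooth_imp_continuous_on: "smooth f \<Longrightarrow> continuous_on UNIV f"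
  by (meson smoothD(1) has_derivative_continuous continuous_at_imp_continuous_on)

lemma smooth_second_derivative_symmetric:
  assumes "smooth f"
  shows "frechet_derivative (\<lambda>x. frechet_derivative f (at x) v) (at z) u
       = frechet_derivative (\<lambda>x. frechet_derivative f (at x) u) (at z) v"
proof -
  define f'' where "f'' x w = frechet_derivative (\<lambda>x. frechet_derivative f (at x) w) (at x)" for x w
  have "smooth (\<lambda>x. f'' x w u)" for w u
    unfolding f''_def using smoothD(2) assms by blast
  then have "continuous_on UNIV (\<lambda>x. f'' x w u)" for w u
    by (rule smooth_imp_continuous_on)
  with smoothD(1)[OF assms] smoothD(1)[OF smoothD(2)[OF assms]]
  have "f'' z v u = f'' z u v"
    unfolding f''_def by (rule second_derivative_symmetric)
  then show ?thesis unfolding f''_def .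
qed

lemma smooth_affine:
  fixes l :: "'a::euclidean_space \<Rightarrow> 'b::euclidean_space"
  shows "linear l \<Longrightarrow> smooth (\<lambda>x. l x + c)"
proof (coinduction arbitrary: l c rule: smooth.coinduct)
  case (smooth l c)
  then have d: "((\<lambda>x. l x + c) has_derivative l) (at x)" for x
    by (auto intro!: derivative_eq_intros linear_imp_has_derivative)
  then have "frechet_derivative (\<lambda>x. l x + c) (at x) = l" for x
    by (metis frechet_derivative_at)
  then have "\<exists>l' c'. (\<lambda>x. frechet_derivative (\<lambda>x. l x + c) (at x) v) = (\<lambda>x. l' x + c') \<and> linear l'"
    for v by (intro exI[of _ "\<lambda>_. 0"] exI[of _ "l v"]) (simp add: linear_zero)
  moreover have "\<forall>x. (\<lambda>x. l x + c) differentiable at x"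
    using d by (auto simp: differentiable_def)
  ultimately show ?case by blast
qed

lemma smooth_linear:
  fixes l :: "'a::euclidean_space \<Rightarrow> 'b::euclidean_space"
  shows "linear l \<Longrightarrow> smooth l"
  using smooth_affine[of l 0] by simp

section \<open>The flow of the vector field z - A z\<close>

definition liouville_flow :: "('a::real_vector \<Rightarrow> 'a) \<Rightarrow> real \<Rightarrow> 'a \<Rightarrow> 'a" where
  "liouville_flow A t z = exp t *\<^sub>R (cos t *\<^sub>R z - sin t *\<^sub>R A z)"

locale complex_structure =
  fixes A :: "'a::euclidean_space \<Rightarrow> 'a"
  assumes linear_A: "linear A"
    and A_squared: "\<And>x. A (A x) = - x"
begin

lemma bounded_linear_A: "bounded_linear A"
  using linear_A by (simp add: linear_conv_bounded_linear)

lemma liouville_flow_has_vector_derivative: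
  "((\<lambda>t. liouville_flow A t z) has_vector_derivative
     liouville_flow A t z - A (liouville_flow A t z)) (at t)"
proof -
  have c: "((\<lambda>t. cos t *\<^sub>R z) has_vector_derivative (- sin t) *\<^sub>R z) (at t)"
    using has_vector_derivative_scaleR[OF DERIV_cos has_vector_derivative_const[of z]] by simp
  have s: "((\<lambda>t. sin t *\<^sub>R A z) has_vector_derivative cos t *\<^sub>R A z) (at t)"
    using has_vector_derivative_scaleR[OF DERIV_sin has_vector_derivative_const[of "A z"]] by simp
  have "((\<lambda>t. liouville_flow A t z) has_vector_derivative
     exp t *\<^sub>R ((- sin t) *\<^sub>R z - cos t *\<^sub>R A z) + exp t *\<^sub>R (cos t *\<^sub>R z - sin t *\<^sub>R A z)) (at t)"
    unfolding liouville_flow_def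
    by (intro has_vector_derivative_scaleR has_vector_derivative_diff DERIV_exp c s)
  moreover have "A (liouville_flow A t z) = exp t *\<^sub>R (cos t *\<^sub>R A z + sin t *\<^sub>R z)"
    using linear_A A_squared
    by (simp add: liouville_flow_def linear_diff linear_scale scaleR_add_right)
  ultimately show ?thesis by (simp add: liouville_flow_def algebra_simps)
qed

lemma liouville_flow_unique:
  assumes y': "\<And>t. (y has_vector_derivative y t - A (y t)) (at t)"
  shows "y t = liouville_flow A t (y 0)"
proof -
  \<comment> \<open>h t is liouville_flow A (- t) (y t), a first integral of the equation\<close>
  define h where "h t = exp (- t) *\<^sub>R (cos t *\<^sub>R y t + sin t *\<^sub>R A (y t))" for t
  have "(h has_vector_derivative 0) (at t)" for t
  proof -
    have "((\<lambda>t. A (y t)) has_vector_derivative A (y t - A (y t))) (at t)"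
      by (rule bounded_linear.has_vector_derivative[OF bounded_linear_A y'])
    then have "(h has_vector_derivative
        exp (- t) *\<^sub>R ((cos t *\<^sub>R (y t - A (y t)) + (- sin t) *\<^sub>R y t)
          + (sin t *\<^sub>R A (y t - A (y t)) + cos t *\<^sub>R A (y t)))
        + (- exp (- t)) *\<^sub>R (cos t *\<^sub>R y t + sin t *\<^sub>R A (y t))) (at t)"
      unfolding h_def
      by (intro has_vector_derivative_scaleR has_vector_derivative_add y' DERIV_cos DERIV_sin)
        (auto intro!: derivative_eq_intros)
    moreover have "A (y t - A (y t)) = A (y t) + y t"
      using linear_A A_squared by (simp add: linear_diff)
    ultimately show ?thesis by (simp add: algebra_simps)
  qed
  then have "h t = h 0"
    by (metis convex_UNIV UNIV_I has_vector_derivative_at_within has_vector_derivative_zero_constant)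
  then have ht: "h t = y 0" by (simp add: h_def)
  have Ah: "A (h t) = exp (- t) *\<^sub>R (cos t *\<^sub>R A (y t) - sin t *\<^sub>R y t)"
    using linear_A A_squared by (simp add: h_def linear_add linear_scale scaleR_add_right scaleR_diff_right)
  have "liouville_flow A t (h t) = (cos t * cos t) *\<^sub>R y t + (sin t * sin t) *\<^sub>R y t"
    unfolding liouville_flow_def Ah by (simp add: h_def algebra_simps exp_minus_inverse)
  also have "\<dots> = y t"
    by (metis scaleR_add_left scaleR_one sin_cos_squared_add3)
  finally show ?thesis by (simp add: ht)
qed

lemma liouville_flow_2pi_multiple:
  "liouville_flow A (2 * pi * of_int n) z = exp (2 * pi * of_int n) *\<^sub>R z"
  using cos_int_2pin[of n] sin_int_2pin[of n] by (simp add: liouville_flow_def)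

lemma commute_with_liouville_flow:
  assumes g': "\<And>z. (g has_derivative D z) (at z)"
    and liouville: "\<And>z. D z (z - A z) = g z - A (g z)"
  shows "g (liouville_flow A t z) = liouville_flow A t (g z)"
proof -
  have "((\<lambda>t. g (liouville_flow A t z)) has_vector_derivative
      g (liouville_flow A t z) - A (g (liouville_flow A t z))) (at t)" for t
    using vector_derivative_diff_chain_within[OF liouville_flow_has_vector_derivative
        has_derivative_at_withinI[OF g']]
    by (simp add: o_def liouville)
  from liouville_flow_unique[OF this] show ?thesis
    by (simp add: liouville_flow_def)
qed

end

section \<open>Diffeomorphisms preserving \<theta>A\<close>

locale compatible_complex_structure = complex_structure A
  for A :: "'a::euclidean_space \<Rightarrow> 'a" +
  fixes \<Omega> :: "'a \<Rightarrow> 'a \<Rightarrow> real"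
  assumes symplectic: "symplectic_form \<Omega>"
    and skew: "\<And>x y. \<Omega> (A x) y + \<Omega> x (A y) = 0"
begin

lemma bilinear_form: "bilinear \<Omega>"
  using symplectic by (simp add: symplectic_form_def)

lemma form_nondegenerate: "(\<And>y. \<Omega> x y = 0) \<Longrightarrow> x = 0"
  using symplectic by (simp add: symplectic_form_def)

lemma form_antisym: "\<Omega> x y = - \<Omega> y x"
proof -
  have "\<Omega> (x + y) (x + y) = 0" "\<Omega> x x = 0" "\<Omega> y y = 0"
    using symplectic by (auto simp: symplectic_form_def)
  then show ?thesis using bilinear_form by (simp add: bilinear_ladd bilinear_radd)
qed

text \<open>In other words d\<theta>A = \<Omega>.\<close>
lemma theta_A_alternation: "\<Omega> (u - A u) v - \<Omega> (v - A v) u = 2 * \<Omega> u v"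
proof -
  have "\<Omega> (A v) u = \<Omega> (A u) v"
    using skew[of v u] form_antisym[of v "A u"] by linarith
  moreover have "\<Omega> (u - A u) v = \<Omega> u v - \<Omega> (A u) v" "\<Omega> (v - A v) u = \<Omega> v u - \<Omega> (A v) u"
    using bilinear_form by (auto simp: bilinear_lsub)
  ultimately show ?thesis using form_antisym[of v u] by linarith
qed

lemma symplectic_linear_surj:
  assumes "linear f" and preserves: "\<And>u v. \<Omega> (f u) (f v) = \<Omega> u v"
  shows "surj f"
proof -
  have "u = 0" if "f u = 0" for u
    using form_nondegenerate preserves[of u] that bilinear_form by (metis bilinear_lzero)
  then show ?thesis
    using \<open>linear f\<close> by (simp add: linear_injective_0 linear_injective_imp_surjective)
qed

context
  fixes g :: "'a \<Rightarrow> 'a"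
  assumes smooth_g: "smooth g"
    and invariant: "pullback g (theta_A \<Omega> A) = theta_A \<Omega> A"
begin

lemma invariant_pointwise:
  "\<Omega> (g z - A (g z)) (frechet_derivative g (at z) v) = \<Omega> (z - A z) v"
  using fun_cong[OF fun_cong[OF invariant, of z], of v] by (simp add: pullback_def theta_A_def)

lemma derivative_symplectic:
  "\<Omega> (frechet_derivative g (at z) u) (frechet_derivative g (at z) v) = \<Omega> u v"
proof -
  define D where "D z = frechet_derivative g (at z)" for z
  define H where "H z v = frechet_derivative (\<lambda>x. D x v) (at z)" for z v
  have g': "(g has_derivative D z) (at z)" for z
    unfolding D_def by (rule smoothD(1)[OF smooth_g])
  have D': "((\<lambda>x. D x v) has_derivative H z v) (at z)" for z v
    unfolding H_def D_def by (rule smoothD(1)[OF smoothD(2)[OF smooth_g]])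
  have differentiated:
    "\<Omega> (g z - A (g z)) (H z v u) + \<Omega> (D z u - A (D z u)) (D z v) = \<Omega> (u - A u) v" for u v
  proof -
    have bb: "bounded_bilinear \<Omega>"
      using bilinear_form by (simp add: bilinear_conv_bounded_bilinear)
    have "((\<lambda>z. g z - A (g z)) has_derivative (\<lambda>u. D z u - A (D z u))) (at z)"
      by (rule has_derivative_diff[OF g' bounded_linear.has_derivative[OF bounded_linear_A g']])
    from bounded_bilinear.FDERIV[OF bb this D']
    have "((\<lambda>z. \<Omega> (z - A z) v) has_derivative
        (\<lambda>u. \<Omega> (g z - A (g z)) (H z v u) + \<Omega> (D z u - A (D z u)) (D z v))) (at z)"
      using invariant_pointwise by (simp add: D_def)
    moreover have "((\<lambda>z. \<Omega> (z - A z) v) has_derivative (\<lambda>u. \<Omega> (u - A u) v)) (at z)"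
      using bounded_bilinear.FDERIV[OF bb has_derivative_diff[OF has_derivative_ident
            bounded_linear.has_derivative[OF bounded_linear_A has_derivative_ident]] has_derivative_const]
      by (simp add: bilinear_rzero[OF bilinear_form])
    ultimately have "(\<lambda>u. \<Omega> (g z - A (g z)) (H z v u) + \<Omega> (D z u - A (D z u)) (D z v))
        = (\<lambda>u. \<Omega> (u - A u) v)"
      by (rule has_derivative_unique)
    from fun_cong[OF this, of u] show ?thesis by simp
  qed
  have "H z u v = H z v u"
    unfolding H_def D_def by (rule smooth_second_derivative_symmetric[OF smooth_g])
  then have "\<Omega> (D z u - A (D z u)) (D z v) - \<Omega> (D z v - A (D z v)) (D z u)
      = \<Omega> (u - A u) v - \<Omega> (v - A v) u"
    using differentiated[of u v] differentiated[of v u] by simp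
  then show ?thesis
    unfolding D_def theta_A_alternation by simp
qed

lemma derivative_liouville_field:
  "frechet_derivative g (at z) (z - A z) = g z - A (g z)"
proof -
  let ?D = "frechet_derivative g (at z)"
  have lin: "linear ?D"
    using smoothD(1)[OF smooth_g] has_derivative_linear by blast
  have "\<Omega> (?D (z - A z) - (g z - A (g z))) y = 0" for y
  proof -
    obtain w where "y = ?D w"
      using symplectic_linear_surj[OF lin derivative_symplectic] by (metis surjD)
    then show ?thesis
      using bilinear_form derivative_symplectic[of z "z - A z" w] invariant_pointwise[of z w]
      by (simp add: bilinear_lsub)
  qed
  then show ?thesis using form_nondegenerate by (metis eq_iff_diff_eq_0)
qed

lemma eq_derivative_at_0: "g = frechet_derivative g (at 0)"
proof
  fix z
  define s where "s n = exp (- 2 * pi) ^ n" for n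
  have homogeneous: "g (s n *\<^sub>R x) = s n *\<^sub>R g x" for n x
  proof -
    have flow: "liouville_flow A (2 * pi * of_int (- int n)) y = s n *\<^sub>R y" for y
      unfolding liouville_flow_2pi_multiple s_def
      by (simp add: exp_of_nat_mult[symmetric] mult.commute)
    from commute_with_liouville_flow[OF smoothD(1)[OF smooth_g] derivative_liouville_field,
        of "2 * pi * of_int (- int n)" x]
    show ?thesis by (simp only: flow)
  qed
  have "s n \<noteq> 0" for n
    by (simp add: s_def)
  moreover have "s \<longlonglongrightarrow> 0"
    unfolding s_def by (intro LIMSEQ_power_zero) simp
  ultimately show "g z = frechet_derivative g (at 0) z"
    by (rule homogeneous_has_derivative_at_0_eq[OF smoothD(1)[OF smooth_g] homogeneous])
qed

end

lemma Aut_theta_A_subset: "Aut (theta_A \<Omega> A) \<subseteq> {g \<in> Sp \<Omega>. g \<circ> A = A \<circ> g}"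
proof safe
  fix g assume "g \<in> Aut (theta_A \<Omega> A)"
  then have smooth: "smooth g" and bij: "bij g"
    and invariant: "pullback g (theta_A \<Omega> A) = theta_A \<Omega> A"
    by (auto simp: Aut_def diffeomorphism_def)
  have g_eq: "g = frechet_derivative g (at 0)"
    by (rule eq_derivative_at_0[OF smooth invariant])
  have "g differentiable at 0"
    using smoothD(1)[OF smooth] by (auto simp: differentiable_def)
  then have linear: "linear g"
    by (subst g_eq) (rule linear_frechet_derivative)
  then have derivative: "frechet_derivative g (at z) = g" for z
    by (rule frechet_derivative_linear)
  show "g \<in> Sp \<Omega>"
    using derivative_symplectic[OF smooth invariant, of 0] bij linear
    by (simp add: Sp_def derivative)
  show "g \<circ> A = A \<circ> g"
  proof
    fix z
    have "g (z - A z) = g z - A (g z)"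
      using derivative_liouville_field[OF smooth invariant, of z] by (simp add: derivative)
    then show "(g \<circ> A) z = (A \<circ> g) z"
      using linear by (simp add: linear_diff)
  qed
qed

end

lemma commuting_Sp_subset_Aut_theta_A:
  fixes A :: "'a::euclidean_space \<Rightarrow> 'a"
  assumes "linear A"
  shows "{g \<in> Sp \<Omega>. g \<circ> A = A \<circ> g} \<subseteq> Aut (theta_A \<Omega> A)"
proof safe
  fix g assume "g \<in> Sp \<Omega>" and commute: "g \<circ> A = A \<circ> g"
  then have linear: "linear g" and "bij g" and preserves: "\<And>x y. \<Omega> (g x) (g y) = \<Omega> x y"
    by (auto simp: Sp_def)
  have "linear (inv g)"
    using linear \<open>bij g\<close> by (simp add: bij_is_inj inj_linear_imp_inv_linear)
  then have "diffeomorphism g"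
    unfolding diffeomorphism_def using \<open>bij g\<close> smooth_linear linear by blast
  moreover have "pullback g (theta_A \<Omega> A) = theta_A \<Omega> A"
  proof (intro ext)
    fix z v
    have "g z - A (g z) = g (z - A z)"
      using commute linear \<open>linear A\<close> by (metis comp_apply linear_diff)
    then show "pullback g (theta_A \<Omega> A) z v = theta_A \<Omega> A z v"
      by (simp add: pullback_def theta_A_def frechet_derivative_linear[OF linear] preserves)
  qed
  ultimately show "g \<in> Aut (theta_A \<Omega> A)"
    by (simp add: Aut_def)
qed

theorem theorem3:
  fixes \<Omega> :: "'a::euclidean_space \<Rightarrow> 'a \<Rightarrow> real" and A :: "'a \<Rightarrow> 'a"
  assumes "symplectic_form \<Omega>"
    and "linear A"
    and "\<forall>x y. \<Omega> (A x) y + \<Omega> x (A y) = 0"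
    and "\<forall>x. A (A x) = - x"
  shows "Aut (theta_A \<Omega> A) = {g \<in> Sp \<Omega>. g \<circ> A = A \<circ> g}"
proof -
  interpret compatible_complex_structure A \<Omega>
    using assms
    by (auto simp: compatible_complex_structure_def complex_structure_def
        compatible_complex_structure_axioms_def)
  show ?thesis
    using Aut_theta_A_subset commuting_Sp_subset_Aut_theta_A[OF \<open>linear A\<close>] by blast
qed

end
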